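(* Let $G$ be a non-regular simple graph on $n$ vertices, and let $u,v$ be vertices of $G$ with $d_G(u)<d_G(v)$. If $F_k(G)$ is regular for some integer $k$ with $2\le k\le n-2$, then $v$ is adjacent in $G$ to every vertex of $V(G)\setminus\{u,v\}$.
   Context: For a simple graph $G=(V,E)$ on $n$ vertices and an integer $1\le k<n$, the $k$-token graph $F_k(G)$ is the graph whose vertices are all $k$-element subsets of $V$, two such subsets $A,B$ being adjacent whenever their symmetric difference $A\triangle B$ is a pair $\{a,b\}$ with $a$ adjacent to $b$ in $G$. $d_G(x)$ denotes the degree of $x$ in $G$. *)

theory Defs
  imports Main
begin

definition simple_graph :: "'a set \<Rightarrow> ('a \<Rightarrow> 'a \<Rightarrow> bool) \<Rightarrow> bool" where
  "simple_graph V E \<longleftrightarrow> finite V \<and>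
     (\<forall>x y. E x y \<longrightarrow> x \<in> V \<and> y \<in> V \<and> x \<noteq> y \<and> E y x)"

definition degree :: "'a set \<Rightarrow> ('a \<Rightarrow> 'a \<Rightarrow> bool) \<Rightarrow> 'a \<Rightarrow> nat" where
  "degree V E x = card {y \<in> V. E x y}"

definition regular :: "'a set \<Rightarrow> ('a \<Rightarrow> 'a \<Rightarrow> bool) \<Rightarrow> bool" where
  "regular V E \<longleftrightarrow> (\<exists>d. \<forall>x \<in> V. degree V E x = d)"

definition token_vertices :: "'a set \<Rightarrow> nat \<Rightarrow> 'a set set" where
  "token_vertices V k = {A. A \<subseteq> V \<and> card A = k}"

definition token_adj :: "('a \<Rightarrow> 'a \<Rightarrow> bool) \<Rightarrow> 'a set \<Rightarrow> 'a set \<Rightarrow> bool" where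
  "token_adj E A B \<longleftrightarrow> (\<exists>a b. (A - B) \<union> (B - A) = {a, b} \<and> E a b)"

end

theory Submission
  imports Defs
begin

text \<open>
  A k-set A has exactly one token-graph neighbour for each edge ab of G leaving A,
  namely A - {a} \<union> {b}; so the degree of A in F_k(G) is the size of the edge cut of A.
  Adding a vertex z to a set S changes the cut by d(z) - 2|N(z) \<inter> S|.  Hence if F_k(G) is
  regular then, for every (k-1)-set S avoiding u and v, comparing the cuts of S + u and
  S + v gives 2(|N(u) \<inter> S| - |N(v) \<inter> S|) = d(u) - d(v).  Fixing a (k-2)-set T and
  taking S = T + x shows that [u ~ x] - [v ~ x] is the same for all x outside T, u, v.
  Since d(u) < d(v), v has a neighbour y \<noteq> u not adjacent to u, where this difference is -1;
  at a non-neighbour w \<noteq> u of v it would be \<ge> 0.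
\<close>

definition neighbours :: "'a set \<Rightarrow> ('a \<Rightarrow> 'a \<Rightarrow> bool) \<Rightarrow> 'a \<Rightarrow> 'a set" where
  "neighbours V E z = {x \<in> V. E z x}"

definition cut_edges :: "'a set \<Rightarrow> ('a \<Rightarrow> 'a \<Rightarrow> bool) \<Rightarrow> 'a set \<Rightarrow> ('a \<times> 'a) set" where
  "cut_edges V E A = {(a, b). a \<in> A \<and> b \<in> V - A \<and> E a b}"

lemma simple_graphD:
  assumes "simple_graph V E" and "E x y"
  shows "x \<in> V" and "y \<in> V"
  using assms by (auto simp: simple_graph_def)

lemma simple_graph_sym: "simple_graph V E \<Longrightarrow> E x y \<longleftrightarrow> E y x"
  by (auto simp: simple_graph_def)

lemma simple_graph_irrefl: "simple_graph V E \<Longrightarrow> \<not> E x x"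
  by (auto simp: simple_graph_def)

lemma simple_graph_finite_subset: "simple_graph V E \<Longrightarrow> A \<subseteq> V \<Longrightarrow> finite A"
  by (auto simp: simple_graph_def intro: finite_subset)

lemma degree_eq_card_neighbours: "degree V E z = card (neighbours V E z)"
  by (simp add: degree_def neighbours_def)

lemma finite_neighbours: "simple_graph V E \<Longrightarrow> finite (neighbours V E z)"
  by (simp add: simple_graph_def neighbours_def)

lemma finite_cut_edges:
  assumes "simple_graph V E"
  shows "finite (cut_edges V E A)"
proof -
  have "cut_edges V E A \<subseteq> V \<times> V"
    using simple_graphD[OF assms] by (auto simp: cut_edges_def)
  then show ?thesis
    by (rule finite_subset) (use assms in \<open>simp add: simple_graph_def\<close>)
qed

lemma sym_diff_eq_pair_imp_swap:
  assumes "finite A" "finite B" "card A = card B"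
    and "(A - B) \<union> (B - A) = {a, b}" and "a \<in> A - B"
  shows "b \<in> B - A" and "B = insert b (A - {a})"
proof -
  have "card (A - B) = card (B - A)"
    using assms(1-3) by (metis card_Diff_subset_Int Int_commute finite_Int)
  moreover have "card (A - B) \<noteq> 0"
    using assms(1,5) by auto
  ultimately have "B - A \<noteq> {}"
    by force
  then show "b \<in> B - A"
    using assms(4,5) by blast
  then have "A - B = {a}" "B - A = {b}"
    using assms(4,5) by blast+
  then show "B = insert b (A - {a})"
    by blast
qed

lemma token_neighbours_eq_image_cut_edges:
  assumes G: "simple_graph V E" and A: "A \<subseteq> V" "card A = k" and "k \<ge> 1"
  shows "{B \<in> token_vertices V k. token_adj E A B}
           = (\<lambda>(a, b). insert b (A - {a})) ` cut_edges V E A"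
    (is "?N = ?f ` _")
proof (intro set_eqI iffI)
  note fin = simple_graph_finite_subset[OF G]
  fix B
  assume "B \<in> ?N"
  then obtain a b where B: "B \<subseteq> V" "card B = k"
    and sd: "(A - B) \<union> (B - A) = {a, b}" and ab: "E a b"
    by (auto simp: token_vertices_def token_adj_def)
  have "a \<in> A - B \<or> a \<in> B - A"
    using sd by blast
  then show "B \<in> ?f ` cut_edges V E A"
  proof
    assume "a \<in> A - B"
    with sym_diff_eq_pair_imp_swap[OF fin[OF A(1)] fin[OF B(1)] _ sd] A B
    have "b \<in> B - A" "B = ?f (a, b)"
      by simp_all
    moreover have "(a, b) \<in> cut_edges V E A"
      using \<open>a \<in> A - B\<close> \<open>b \<in> B - A\<close> ab B by (auto simp: cut_edges_def)
    ultimately show ?thesis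
      by blast
  next
    assume "a \<in> B - A"
    moreover have "(B - A) \<union> (A - B) = {a, b}"
      using sd by blast
    ultimately have "b \<in> A - B" "A = insert b (B - {a})"
      using sym_diff_eq_pair_imp_swap[OF fin[OF B(1)] fin[OF A(1)]] A B by simp_all
    with \<open>a \<in> B - A\<close> have "B = ?f (b, a)"
      by auto
    moreover have "(b, a) \<in> cut_edges V E A"
      using \<open>b \<in> A - B\<close> \<open>a \<in> B - A\<close> simple_graph_sym[OF G] ab B
      by (auto simp: cut_edges_def)
    ultimately show ?thesis
      by blast
  qed
next
  fix B
  assume "B \<in> ?f ` cut_edges V E A"
  then obtain a b where "a \<in> A" "b \<in> V" "b \<notin> A" "E a b" and B: "B = insert b (A - {a})"
    by (auto simp: cut_edges_def)
  moreover have "finite A"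
    using simple_graph_finite_subset[OF G A(1)] .
  ultimately have "card B = k" "B \<subseteq> V" "(A - B) \<union> (B - A) = {a, b}"
    using A \<open>k \<ge> 1\<close> by (auto simp: card_Diff_singleton)
  then show "B \<in> ?N"
    using \<open>E a b\<close> by (auto simp: token_vertices_def token_adj_def)
qed

lemma degree_token_graph_eq_card_cut_edges:
  assumes G: "simple_graph V E" and A: "A \<subseteq> V" "card A = k" and "k \<ge> 1"
  shows "degree (token_vertices V k) (token_adj E) A = card (cut_edges V E A)"
proof -
  have "inj_on (\<lambda>(a, b). insert b (A - {a})) (cut_edges V E A)"
  proof (rule inj_onI, clarify)
    fix a b a' b'
    assume "(a, b) \<in> cut_edges V E A" "(a', b') \<in> cut_edges V E A"
      and eq: "insert b (A - {a}) = insert b' (A - {a'})"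
    then have "a \<in> A" "b \<notin> A" "a' \<in> A" "b' \<notin> A"
      by (auto simp: cut_edges_def)
    have "b = b'"
      using eq \<open>b \<notin> A\<close> by blast
    moreover have "a = a'"
    proof (rule ccontr)
      assume "a \<noteq> a'"
      then have "a \<in> insert b (A - {a})"
        using eq \<open>a \<in> A\<close> by simp
      then show False
        using \<open>a \<in> A\<close> \<open>b \<notin> A\<close> by auto
    qed
    ultimately show "a = a' \<and> b = b'"
      by simp
  qed
  then show ?thesis
    unfolding degree_def token_neighbours_eq_image_cut_edges[OF assms] by (simp add: card_image)
qed

lemma card_cut_edges_insert:
  assumes G: "simple_graph V E" and "S \<subseteq> V" "z \<in> V" "z \<notin> S"
  shows "int (card (cut_edges V E (insert z S)))
           = int (card (cut_edges V E S)) + int (degree V E z)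
             - 2 * int (card (neighbours V E z \<inter> S))"
proof -
  note graph = simple_graph_sym[OF G] simple_graph_irrefl[OF G]
  define In where "In = (\<lambda>a. (a, z)) ` (neighbours V E z \<inter> S)"
  define Out where "Out = Pair z ` (neighbours V E z - S)"
  have split: "cut_edges V E (insert z S) = (cut_edges V E S - In) \<union> Out"
    using assms(2-4) by (auto simp: graph cut_edges_def In_def Out_def neighbours_def)
  have "In \<subseteq> cut_edges V E S"
    using assms(2-4) by (auto simp: graph cut_edges_def In_def neighbours_def)
  then have "card (cut_edges V E S - In) = card (cut_edges V E S) - card In"
    and "card In \<le> card (cut_edges V E S)"
    using finite_cut_edges[OF G] by (simp_all add: card_Diff_subset card_mono finite_subset)
  moreover have "card In = card (neighbours V E z \<inter> S)"
    unfolding In_def by (rule card_image) (simp add: inj_on_def)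
  moreover have "card Out = card (neighbours V E z - S)"
    unfolding Out_def by (rule card_image) (simp add: inj_on_def)
  moreover have "card (neighbours V E z) = card (neighbours V E z \<inter> S) + card (neighbours V E z - S)"
    using finite_neighbours[OF G] by (rule card_Int_Diff)
  moreover have "card (cut_edges V E (insert z S)) = card (cut_edges V E S - In) + card Out"
  proof -
    have "(cut_edges V E S - In) \<inter> Out = {}"
      using assms(4) by (auto simp: cut_edges_def Out_def)
    moreover have "finite Out"
      using finite_neighbours[OF G] by (simp add: Out_def)
    ultimately show ?thesis
      unfolding split using finite_cut_edges[OF G, of S] by (simp add: card_Un_disjoint)
  qed
  ultimately show ?thesis
    unfolding degree_eq_card_neighbours by linarith
qed

lemma card_neighbours_inter_insert:
  assumes "finite T" "x \<in> V" "x \<notin> T"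
  shows "card (neighbours V E z \<inter> insert x T)
           = card (neighbours V E z \<inter> T) + of_bool (E z x)"
proof -
  have "neighbours V E z \<inter> insert x T
          = (if E z x then insert x (neighbours V E z \<inter> T) else neighbours V E z \<inter> T)"
    using assms by (auto simp: neighbours_def)
  then show ?thesis
    using assms by simp
qed

lemma exists_neighbour_not_adjacent_to_lower_degree:
  assumes G: "simple_graph V E" and "u \<in> V" "v \<in> V" and "degree V E u < degree V E v"
  obtains y where "y \<in> V" "y \<noteq> u" "E v y" "\<not> E u y"
proof (rule ccontr)
  assume "\<not> thesis"
  then have "neighbours V E v - {u} \<subseteq> neighbours V E u - {v}"
    using that simple_graph_irrefl[OF G] by (auto simp: neighbours_def)
  then have le: "card (neighbours V E v - {u}) \<le> card (neighbours V E u - {v})"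
    using finite_neighbours[OF G] by (auto intro: card_mono)
  have "card (neighbours V E v) \<le> card (neighbours V E u)"
  proof (cases "u \<in> neighbours V E v")
    case True
    then have "v \<in> neighbours V E u"
      using simple_graph_sym[OF G] assms(2,3) by (auto simp: neighbours_def)
    then have "card (neighbours V E u) > 0" "card (neighbours V E v) > 0"
      using True finite_neighbours[OF G] card_gt_0_iff by blast+
    then show ?thesis
      using le True \<open>v \<in> neighbours V E u\<close> finite_neighbours[OF G] by (simp add: card_Diff_singleton)
  next
    case False
    then have "v \<notin> neighbours V E u"
      using simple_graph_sym[OF G] assms(2,3) by (auto simp: neighbours_def)
    then show ?thesis
      using le False by simp
  qed
  then show False
    using assms(4) by (simp add: degree_eq_card_neighbours)
qed

lemma regular_token_graph_neighbour_balance: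
  assumes G: "simple_graph V E" and reg: "regular (token_vertices V k) (token_adj E)"
    and "k \<ge> 1" and "u \<in> V" "v \<in> V"
    and S: "S \<subseteq> V" "card S = k - 1" "u \<notin> S" "v \<notin> S"
  shows "2 * (int (card (neighbours V E u \<inter> S)) - int (card (neighbours V E v \<inter> S)))
           = int (degree V E u) - int (degree V E v)"
proof -
  obtain d where "\<forall>A \<in> token_vertices V k. degree (token_vertices V k) (token_adj E) A = d"
    using reg by (auto simp: regular_def)
  then have cut: "card (cut_edges V E (insert z S)) = d" if "z \<in> V" "z \<notin> S" for z
  proof -
    have A: "insert z S \<subseteq> V" "card (insert z S) = k"
      using that S(1,2) \<open>k \<ge> 1\<close> simple_graph_finite_subset[OF G S(1)] by auto
    with \<open>\<forall>A \<in> _. _\<close> have "degree (token_vertices V k) (token_adj E) (insert z S) = d"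
      by (simp add: token_vertices_def)
    then show ?thesis
      using degree_token_graph_eq_card_cut_edges[OF G A \<open>k \<ge> 1\<close>] by simp
  qed
  show ?thesis
    using card_cut_edges_insert[OF G S(1) \<open>u \<in> V\<close> \<open>u \<notin> S\<close>]
      card_cut_edges_insert[OF G S(1) \<open>v \<in> V\<close> \<open>v \<notin> S\<close>]
      cut[OF \<open>u \<in> V\<close> \<open>u \<notin> S\<close>] cut[OF \<open>v \<in> V\<close> \<open>v \<notin> S\<close>]
    by (simp add: right_diff_distrib)
qed

lemma regular_token_graph_adjacency_difference_eq:
  assumes G: "simple_graph V E" and reg: "regular (token_vertices V k) (token_adj E)"
    and "k \<ge> 2" and "u \<in> V" "v \<in> V"
    and T: "T \<subseteq> V" "card T = k - 2" "u \<notin> T" "v \<notin> T"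
    and "x \<in> V - T - {u, v}" "x' \<in> V - T - {u, v}"
  shows "of_bool (E u x) - of_bool (E v x) = (of_bool (E u x') - of_bool (E v x') :: int)"
proof -
  have "finite T"
    using simple_graph_finite_subset[OF G T(1)] .
  have "2 * (of_bool (E u z) - of_bool (E v z)
              + int (card (neighbours V E u \<inter> T)) - int (card (neighbours V E v \<inter> T)))
          = int (degree V E u) - int (degree V E v)"
    if "z \<in> V - T - {u, v}" for z
  proof -
    have "2 * (int (card (neighbours V E u \<inter> insert z T))
                - int (card (neighbours V E v \<inter> insert z T)))
            = int (degree V E u) - int (degree V E v)"
    proof (rule regular_token_graph_neighbour_balance[OF G reg _ \<open>u \<in> V\<close> \<open>v \<in> V\<close>])
      show "card (insert z T) = k - 1"
        using that T(2) \<open>finite T\<close> \<open>k \<ge> 2\<close> by simp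
    qed (use that T \<open>k \<ge> 2\<close> in auto)
    moreover have "int (card (neighbours V E u' \<inter> insert z T))
                     = int (card (neighbours V E u' \<inter> T)) + of_bool (E u' z)" for u'
      using card_neighbours_inter_insert[OF \<open>finite T\<close>] that by simp
    ultimately show ?thesis
      by (simp add: algebra_simps)
  qed
  from this[OF \<open>x \<in> _\<close>] this[OF \<open>x' \<in> _\<close>] show ?thesis
    by simp
qed

theorem lemma3:
  fixes V :: "'a set" and E :: "'a \<Rightarrow> 'a \<Rightarrow> bool" and u v :: 'a and k :: nat
  assumes "simple_graph V E"
    and "\<not> regular V E"
    and "u \<in> V" and "v \<in> V"
    and "degree V E u < degree V E v"
    and "2 \<le> k" and "k \<le> card V - 2"
    and "regular (token_vertices V k) (token_adj E)"
  shows "\<forall>w \<in> V - {u, v}. E v w"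
proof (rule ccontr)
  assume "\<not> ?thesis"
  then obtain w where w: "w \<in> V" "w \<noteq> u" "w \<noteq> v" "\<not> E v w"
    by blast
  obtain y where y: "y \<in> V" "y \<noteq> u" "E v y" "\<not> E u y"
    by (rule exists_neighbour_not_adjacent_to_lower_degree[OF assms(1,3-5)])
  have "u \<noteq> v" "y \<noteq> v" "y \<noteq> w"
    using assms(5) y(3) w(4) simple_graph_irrefl[OF assms(1)] by auto
  then have "card {u, v, w, y} = 4" "{u, v, w, y} \<subseteq> V"
    using w y assms(3,4) by auto
  then have "k - 2 \<le> card (V - {u, v, w, y})"
    using assms(7) simple_graph_finite_subset[OF assms(1)] by (simp add: card_Diff_subset)
  then obtain T where T: "T \<subseteq> V - {u, v, w, y}" "card T = k - 2"
    by (meson obtain_subset_with_card_n)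
  then have "T \<subseteq> V" "u \<notin> T" "v \<notin> T" "w \<in> V - T - {u, v}" "y \<in> V - T - {u, v}"
    using w y \<open>y \<noteq> v\<close> by auto
  then have "of_bool (E u w) - of_bool (E v w) = (of_bool (E u y) - of_bool (E v y) :: int)"
    by (rule regular_token_graph_adjacency_difference_eq[OF assms(1,8,6,3,4) _ T(2)])
  with w(4) y(3,4) show False
    by (cases "E u w") simp_all
qed

end
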